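(* Let $\gamma>0$. There exists a sequence of positive numbers $(\beta_n)_{n\ge1}$ such that, with the convention $\beta_0=0$, $$\sup_{n\ge1}\Big\{(1-\nu_n)\Big(p_n+\frac{|q_n|}{\beta_n}+|q_{n-1}|\,\beta_{n-1}\Big)\Big\}<1 .$$
   Context: For $\gamma>0$ and integers $n\ge1$ define $\nu_n=\nu_n(\gamma)=(-1)^n\frac{\Gamma(2\gamma)\Gamma(n+\gamma)}{\Gamma(\gamma)\Gamma(n+2\gamma)}$, $p_n=p_n(\gamma)=\frac{2n(n-1)+(6n-4)\gamma+6\gamma^2}{(2n+3\gamma)(2n+3\gamma-2)}=\frac12+\frac{-\gamma+\frac32\gamma^2}{(2n+3\gamma)(2n+3\gamma-2)}$, $q_n=q_n(\gamma)=-\frac{1}{2n+3\gamma}\sqrt{\frac{(n+3\gamma-1)(n+1)(n+\gamma)}{(2n+3\gamma+1)(2n+3\gamma-1)}}$ (for $n\ge1$; the term with $q_0$ is multiplied by $\beta_0=0$ and hence absent). *)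

theory Defs
  imports "HOL-Analysis.Analysis"
begin

definition nu :: "real \<Rightarrow> nat \<Rightarrow> real" where
  "nu \<gamma> n = (-1) ^ n * (Gamma (2*\<gamma>) * Gamma (real n + \<gamma>)) /
                      (Gamma \<gamma> * Gamma (real n + 2*\<gamma>))"

definition pp :: "real \<Rightarrow> nat \<Rightarrow> real" where
  "pp \<gamma> n = (2 * real n * (real n - 1) + (6 * real n - 4) * \<gamma> + 6 * \<gamma>^2) /
             ((2 * real n + 3*\<gamma>) * (2 * real n + 3*\<gamma> - 2))"

definition qq :: "real \<Rightarrow> nat \<Rightarrow> real" where
  "qq \<gamma> n = - (1 / (2 * real n + 3*\<gamma>)) *
      sqrt (((real n + 3*\<gamma> - 1) * (real n + 1) * (real n + \<gamma>)) /
            ((2 * real n + 3*\<gamma> + 1) * (2 * real n + 3*\<gamma> - 1)))"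

end

theory Submission
  imports Defs
begin

text \<open>
  Since \<open>\<Gamma>(2\<gamma>)\<Gamma>(n+\<gamma>)/(\<Gamma>(\<gamma>)\<Gamma>(n+2\<gamma>))\<close> is the Pochhammer quotient \<open>(\<gamma>)\<^sub>n/(2\<gamma>)\<^sub>n\<close>,
  we have \<open>\<nu>\<^sub>n = (-1)\<^sup>n r\<^sub>n\<close> with \<open>r\<^sub>n\<close> decreasing from \<open>r\<^sub>1 = 1/2\<close>. Taking
  \<open>\<beta>\<^sub>n = K\<^sub>n |q\<^sub>n|\<close>, the two \<open>q\<close>-terms become \<open>1/K\<^sub>n\<close> and \<open>K\<^sub>n\<^sub>-\<^sub>1 q\<^sub>n\<^sub>-\<^sub>1\<^sup>2\<close>,
  and \<open>q\<^sub>m\<^sup>2 \<le> 1/(8(2m+3\<gamma>))\<close>. For even \<open>n\<close> the factor \<open>1 - \<nu>\<^sub>n\<close> is at most 1, so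
  a weight growing like \<open>2n+3\<gamma>\<close> keeps both terms of order \<open>1/n\<close> next to
  \<open>p\<^sub>n \<approx> 1/2\<close>; for odd \<open>n \<ge> 3\<close> the factor is at most \<open>1 + r\<^sub>3\<close>, and the constant
  weight 12 leaves enough room. The cases \<open>n = 1, 2\<close> are computed exactly, and every
  case ends in a polynomial inequality with nonnegative coefficients.
\<close>

lemma Gamma_ratio_eq_pochhammer:
  fixes a b :: real
  assumes "a > 0" "b > 0"
  shows "Gamma b * Gamma (real n + a) / (Gamma a * Gamma (real n + b))
           = pochhammer a n / pochhammer b n"
proof -
  have "a \<notin> \<int>\<^sub>\<le>\<^sub>0" "b \<notin> \<int>\<^sub>\<le>\<^sub>0" using assms by auto
  moreover have "Gamma a > 0" "Gamma (real n + b) > 0" using assms by auto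
  ultimately show ?thesis by (simp add: pochhammer_Gamma add.commute field_simps)
qed

lemma nu_eq_pochhammer:
  "\<gamma> > 0 \<Longrightarrow> nu \<gamma> n = (-1) ^ n * (pochhammer \<gamma> n / pochhammer (2*\<gamma>) n)"
  unfolding nu_def by (simp flip: Gamma_ratio_eq_pochhammer times_divide_eq_right)

lemma pochhammer_ratio_antimono:
  fixes a b :: real
  assumes "0 < a" "a \<le> b" "m \<le> n"
  shows "pochhammer a n / pochhammer b n \<le> pochhammer a m / pochhammer b m"
  using assms(3)
proof (induction n rule: dec_induct)
  case (step n)
  have "(a + real n) / (b + real n) \<le> 1" using assms by simp
  moreover have "pochhammer a n / pochhammer b n \<ge> 0"
    using assms by (simp add: pochhammer_nonneg)
  ultimately have "pochhammer a n / pochhammer b n * ((a + real n) / (b + real n))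
                    \<le> pochhammer a n / pochhammer b n"
    by (rule mult_left_le)
  then have "pochhammer a (Suc n) / pochhammer b (Suc n) \<le> pochhammer a n / pochhammer b n"
    by (simp add: pochhammer_Suc)
  then show ?case using step.IH by linarith
qed simp

lemma pochhammer_ratio_2:
  assumes "(\<gamma>::real) > 0"
  shows "pochhammer \<gamma> 2 / pochhammer (2*\<gamma>) 2 = (1+\<gamma>)/(2*(1+2*\<gamma>))"
proof -
  have "pochhammer \<gamma> 2 / pochhammer (2*\<gamma>) 2 = (\<gamma> * (1+\<gamma>)) / (\<gamma> * (2*(1+2*\<gamma>)))"
    by (simp add: numeral_2_eq_2 pochhammer_Suc algebra_simps)
  then show ?thesis using assms by simp
qed

lemma pochhammer_ratio_3:
  assumes "(\<gamma>::real) > 0"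
  shows "pochhammer \<gamma> 3 / pochhammer (2*\<gamma>) 3 = (2+\<gamma>)/(4*(1+2*\<gamma>))"
proof -
  have "pochhammer \<gamma> 3 / pochhammer (2*\<gamma>) 3
          = (\<gamma> * (1+\<gamma>) * (2+\<gamma>)) / (\<gamma> * (1+\<gamma>) * (4*(1+2*\<gamma>)))"
    by (simp add: numeral_3_eq_3 pochhammer_Suc algebra_simps)
  then show ?thesis using assms by (simp add: add_pos_pos)
qed

lemma qq_squared:
  assumes "\<gamma> \<ge> 0" "n \<ge> 1"
  shows "(qq \<gamma> n)\<^sup>2 = ((real n + 3*\<gamma> - 1) * (real n + 1) * (real n + \<gamma>)) /
            ((2 * real n + 3*\<gamma> + 1) * (2 * real n + 3*\<gamma> - 1)) / (2 * real n + 3*\<gamma>)\<^sup>2"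
proof -
  have "real n \<ge> 1" using assms by simp
  then have "((real n + 3*\<gamma> - 1) * (real n + 1) * (real n + \<gamma>)) /
             ((2 * real n + 3*\<gamma> + 1) * (2 * real n + 3*\<gamma> - 1)) \<ge> 0"
    using assms by (intro divide_nonneg_pos mult_nonneg_nonneg mult_pos_pos) auto
  then show ?thesis unfolding qq_def by (simp add: power_divide)
qed

lemma abs_qq_pos: "\<gamma> > 0 \<Longrightarrow> n \<ge> 1 \<Longrightarrow> \<bar>qq \<gamma> n\<bar> > 0"
proof -
  assume "\<gamma> > 0" "n \<ge> 1"
  then have "((real n + 3*\<gamma> - 1) * (real n + 1) * (real n + \<gamma>)) /
             ((2 * real n + 3*\<gamma> + 1) * (2 * real n + 3*\<gamma> - 1)) > 0"
    by (intro divide_pos_pos mult_pos_pos) auto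
  with \<open>\<gamma> > 0\<close> show ?thesis unfolding qq_def by (simp add: add_pos_pos)
qed

lemma qq_squared_le:
  assumes "\<gamma> \<ge> 0" "n \<ge> 1"
  shows "(qq \<gamma> n)\<^sup>2 \<le> 1 / (8 * (2 * real n + 3*\<gamma>))"
proof -
  define x where "x = 2 * real n + 3*\<gamma>"
  define A where "A = (real n + 3*\<gamma> - 1) * (real n + 1) * (real n + \<gamma>)"
  define t where "t = real n - 1"
  have t: "t \<ge> 0" and n: "real n = t + 1" using assms(2) unfolding t_def by auto
  have x: "x > 1" using assms unfolding x_def by simp
  have "x * (x\<^sup>2 - 1) - 8 * A
     = 6*(1 - 3/2*\<gamma>)\<^sup>2 + 27*\<gamma>*(\<gamma> - 1/4)\<^sup>2 + 6*\<gamma>\<^sup>2 + 21/16*\<gamma>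
       + t*(30*(\<gamma> - 4/15)\<^sup>2 + 58/15) + 4*t\<^sup>2*\<gamma>"
    unfolding x_def A_def n by (simp add: algebra_simps power2_eq_square power3_eq_cube)
  also have "\<dots> \<ge> 0"
    using assms t by (intro add_nonneg_nonneg mult_nonneg_nonneg) simp_all
  finally have "A \<le> x / 8 * ((x + 1) * (x - 1))"
    by (simp add: algebra_simps power2_eq_square)
  then have "A / ((x + 1) * (x - 1)) \<le> x / 8"
    using x by (simp add: divide_le_eq)
  then have "A / ((x + 1) * (x - 1)) / x\<^sup>2 \<le> (x / 8) / x\<^sup>2"
    by (rule divide_right_mono) simp
  then have "(qq \<gamma> n)\<^sup>2 \<le> (x / 8) / x\<^sup>2"
    using qq_squared[OF assms] unfolding x_def[symmetric] A_def[symmetric] by simp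
  also have "\<dots> = 1 / (8 * x)" using x by (simp add: power2_eq_square)
  finally show ?thesis unfolding x_def .
qed

lemma pp_nonneg: "\<gamma> \<ge> 0 \<Longrightarrow> n \<ge> 1 \<Longrightarrow> pp \<gamma> n \<ge> 0"
  unfolding pp_def by (intro divide_nonneg_nonneg add_nonneg_nonneg mult_nonneg_nonneg) auto

lemma pp_2: "pp \<gamma> 2 = (4 + 8*\<gamma> + 6*\<gamma>\<^sup>2) / ((4 + 3*\<gamma>) * (2 + 3*\<gamma>))"
  unfolding pp_def by (simp add: algebra_simps)

lemma pp_bound_2:
  assumes "\<gamma> \<ge> 0"
  shows "(1 - (1+\<gamma>)/(2*(1+2*\<gamma>))) *
           (pp \<gamma> 2 + 16/(9*(4+3*\<gamma>)) + 4*\<gamma>/((2+3*\<gamma>)*(1+3*\<gamma>))) \<le> 99/100"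
proof -
  define a b c d where "a = 4+3*\<gamma>" and "b = 2+3*\<gamma>" and "c = 1+3*\<gamma>" and "d = 1+2*\<gamma>"
  have pos: "a > 0" "b > 0" "c > 0" "d > 0" using assms unfolding a_def b_def c_def d_def by auto
  define D where "D = 18*d*a*b*c"
  define Q where "Q = (2*d-1-\<gamma>) * (9*c*(4+8*\<gamma>+6*\<gamma>\<^sup>2) + 16*b*c + 36*\<gamma>*a)"
  have "99*D - 100*Q = 7456 + 36156*\<gamma> + 69354*\<gamma>\<^sup>2 + 99846*\<gamma>^3 + 47628*\<gamma>^4"
    unfolding D_def Q_def a_def b_def c_def d_def
    by (simp add: algebra_simps power2_eq_square power3_eq_cube power4_eq_xxxx)
  also have "\<dots> \<ge> 0" using assms by (intro add_nonneg_nonneg mult_nonneg_nonneg) simp_all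
  finally have "Q \<le> 99/100 * D" by linarith
  moreover have "D > 0" using pos unfolding D_def by simp
  moreover have "(1 - (1+\<gamma>)/(2*d)) * ((4+8*\<gamma>+6*\<gamma>\<^sup>2)/(a*b) + 16/(9*a) + 4*\<gamma>/(b*c)) = Q / D"
    unfolding D_def Q_def using pos by (simp add: field_simps)
  ultimately show ?thesis unfolding pp_2 a_def b_def c_def d_def by (simp add: pos_divide_le_eq)
qed

lemma pp_bound_odd:
  assumes "\<gamma> \<ge> 0" "n \<ge> 3"
  shows "(1 + (2+\<gamma>)/(4*(1+2*\<gamma>))) * (pp \<gamma> n + 1/12 + 9/128) \<le> 99/100"
proof -
  define t where "t = real n - 3"
  have t: "t \<ge> 0" and n: "real n = t + 3" using assms(2) unfolding t_def by auto
  define x y d where "x = 2 * real n + 3*\<gamma>" and "y = 2 * real n + 3*\<gamma> - 2" and "d = 1+2*\<gamma>"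
  have pos: "x > 0" "y > 0" "d > 0" using assms unfolding x_def y_def d_def by auto
  define num where "num = 2 * real n * (real n - 1) + (6 * real n - 4) * \<gamma> + 6 * \<gamma>\<^sup>2"
  define D where "D = 4*d*384*(x*y)"
  define Q where "Q = (4*d+2+\<gamma>)*(384*num+59*(x*y))"
  have "99*D - 100*Q
      = 35136 + 2151792*\<gamma> + 2360016*\<gamma>\<^sup>2 + 185652*\<gamma>^3 + 29280*t + 1582128*t*\<gamma>
        + 938736*t*\<gamma>\<^sup>2 + 5856*t\<^sup>2 + 312912*t\<^sup>2*\<gamma>"
    unfolding D_def Q_def x_def y_def d_def num_def n
    by (simp add: algebra_simps power2_eq_square power3_eq_cube)
  also have "\<dots> \<ge> 0" using assms t by (intro add_nonneg_nonneg mult_nonneg_nonneg) simp_all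
  finally have "Q \<le> 99/100 * D" by linarith
  moreover have "D > 0" using pos unfolding D_def by simp
  moreover have "(1 + (2+\<gamma>)/(4*d)) * (num/(x*y) + 1/12 + 9/128) = Q / D"
    unfolding Q_def D_def using pos by (simp add: field_simps)
  ultimately show ?thesis unfolding pp_def x_def y_def d_def num_def by (simp add: pos_divide_le_eq)
qed

lemma pp_bound_even:
  assumes "\<gamma> \<ge> 0" "n \<ge> 4"
  shows "pp \<gamma> n + 16/(9*(2 * real n + 3*\<gamma>)) + 3/(2*(2 * real n + 3*\<gamma> - 2)) \<le> 99/100"
proof -
  define t where "t = real n - 4"
  have t: "t \<ge> 0" and n: "real n = t + 4" using assms(2) unfolding t_def by auto
  define x y where "x = 2 * real n + 3*\<gamma>" and "y = 2 * real n + 3*\<gamma> - 2"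
  have pos: "x > 0" "y > 0" using assms unfolding x_def y_def by auto
  define num where "num = 2 * real n * (real n - 1) + (6 * real n - 4) * \<gamma> + 6 * \<gamma>\<^sup>2"
  define D where "D = 18*(x*y)"
  define Q where "Q = 18*num + 32*y + 27*x"
  have "99*D - 100*Q = 1536 + 21144*\<gamma> + 5238*\<gamma>\<^sup>2 + 12896*t + 10584*t*\<gamma> + 3528*t\<^sup>2"
    unfolding D_def Q_def x_def y_def num_def n by (simp add: algebra_simps power2_eq_square)
  also have "\<dots> \<ge> 0" using assms t by (intro add_nonneg_nonneg mult_nonneg_nonneg) simp_all
  finally have "Q \<le> 99/100 * D" by linarith
  moreover have "D > 0" using pos unfolding D_def by simp
  moreover have "num/(x*y) + 16/(9*x) + 3/(2*y) = Q / D"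
    unfolding Q_def D_def using pos by (simp add: field_simps)
  ultimately show ?thesis unfolding pp_def x_def y_def num_def by (simp add: pos_divide_le_eq)
qed

definition weight :: "real \<Rightarrow> nat \<Rightarrow> real" where
  "weight \<gamma> n = (if n = 1 then 2 * (2 + 3*\<gamma>) else if odd n then 12
                   else 9/16 * (2 * real n + 3*\<gamma>))"

definition beta :: "real \<Rightarrow> nat \<Rightarrow> real" where
  "beta \<gamma> n = (if n = 0 then 0 else weight \<gamma> n * \<bar>qq \<gamma> n\<bar>)"

lemma weight_pos: "\<gamma> > 0 \<Longrightarrow> weight \<gamma> n > 0"
  unfolding weight_def by (auto simp: add_nonneg_pos)

lemma beta_pos: "\<gamma> > 0 \<Longrightarrow> n \<ge> 1 \<Longrightarrow> beta \<gamma> n > 0"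
  unfolding beta_def using weight_pos abs_qq_pos by simp

lemma weighted_terms_eq:
  assumes "\<gamma> > 0" "n \<ge> 1"
  shows "pp \<gamma> n + \<bar>qq \<gamma> n\<bar> / beta \<gamma> n + \<bar>qq \<gamma> (n - 1)\<bar> * beta \<gamma> (n - 1)
           = pp \<gamma> n + 1 / weight \<gamma> n +
             (if n = 1 then 0 else weight \<gamma> (n - 1) * (qq \<gamma> (n - 1))\<^sup>2)"
  using assms abs_qq_pos[OF assms] weight_pos[of \<gamma> n]
  by (auto simp: beta_def power2_eq_square abs_mult_self_eq)

lemma weighted_sum_nonneg:
  assumes "\<gamma> > 0" "n \<ge> 1"
  shows "pp \<gamma> n + 1 / weight \<gamma> n + weight \<gamma> (n - 1) * (qq \<gamma> (n - 1))\<^sup>2 \<ge> 0"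
  using pp_nonneg[of \<gamma> n] weight_pos[OF assms(1), of n] weight_pos[OF assms(1), of "n - 1"] assms
  by (intro add_nonneg_nonneg mult_nonneg_nonneg) simp_all

lemma weighted_bound_1:
  assumes "\<gamma> > 0"
  shows "(1 - nu \<gamma> 1) * (pp \<gamma> 1 + 1 / weight \<gamma> 1) = 1 - 1 / (4 * (2 + 3*\<gamma>))"
proof -
  define a where "a = 2 + 3*\<gamma>"
  have "pp \<gamma> 1 = (\<gamma> * (2*a - 2)) / (\<gamma> * (3*a))"
    unfolding pp_def a_def by (simp add: algebra_simps power2_eq_square)
  then have pp1: "pp \<gamma> 1 = (2*a - 2) / (3*a)" using assms by simp
  have nu1: "nu \<gamma> 1 = -1/2" using nu_eq_pochhammer[OF assms, of 1] assms by simp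
  have "a \<noteq> 0" using assms unfolding a_def by simp
  then show ?thesis unfolding pp1 nu1 weight_def a_def[symmetric] by (simp add: field_simps)
qed

lemma weighted_bound_2:
  assumes "\<gamma> > 0"
  shows "(1 - nu \<gamma> 2) * (pp \<gamma> 2 + 1 / weight \<gamma> 2 + weight \<gamma> 1 * (qq \<gamma> 1)\<^sup>2) \<le> 99/100"
proof -
  define a b c where "a = 2 + 3*\<gamma>" and "b = 1 + 3*\<gamma>" and "c = 1 + \<gamma>"
  have nz: "a \<noteq> 0" "b \<noteq> 0" "c \<noteq> 0" using assms unfolding a_def b_def c_def by auto
  have "(qq \<gamma> 1)\<^sup>2 = (3*\<gamma> * 2 * c) / (3*c * b) / a\<^sup>2"
    using qq_squared[of \<gamma> 1] assms unfolding a_def b_def c_def by (simp add: algebra_simps)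
  then have "weight \<gamma> 1 * (qq \<gamma> 1)\<^sup>2 = 4*\<gamma> / (a*b)"
    using nz unfolding weight_def a_def[symmetric] by (simp add: field_simps power2_eq_square)
  moreover have "nu \<gamma> 2 = (1+\<gamma>)/(2*(1+2*\<gamma>))"
    using nu_eq_pochhammer[OF assms, of 2] pochhammer_ratio_2[OF assms] by simp
  moreover have "1 / weight \<gamma> 2 = 16/(9*(4+3*\<gamma>))" unfolding weight_def by simp
  ultimately show ?thesis
    using pp_bound_2[of \<gamma>] assms unfolding a_def b_def by simp
qed

lemma weighted_bound_odd:
  assumes "\<gamma> > 0" "odd n" "n \<ge> 3"
  shows "(1 - nu \<gamma> n) * (pp \<gamma> n + 1 / weight \<gamma> n + weight \<gamma> (n - 1) * (qq \<gamma> (n - 1))\<^sup>2)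
           \<le> 99/100"
proof -
  define y where "y = 2 * real (n - 1) + 3*\<gamma>"
  have y: "y > 0" using assms unfolding y_def by simp
  have w: "weight \<gamma> (n - 1) = 9/16 * y" using assms unfolding weight_def y_def by auto
  have "(qq \<gamma> (n - 1))\<^sup>2 \<le> 1 / (8 * y)"
    using assms qq_squared_le[of \<gamma> "n - 1"] unfolding y_def by simp
  then have "weight \<gamma> (n - 1) * (qq \<gamma> (n - 1))\<^sup>2 \<le> 9/16 * y * (1 / (8 * y))"
    unfolding w by (rule mult_left_mono) (use y in simp)
  also have "\<dots> = 9/128" using y by simp
  finally have q: "weight \<gamma> (n - 1) * (qq \<gamma> (n - 1))\<^sup>2 \<le> 9/128" .
  define r where "r = pochhammer \<gamma> n / pochhammer (2*\<gamma>) n"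
  have "r \<le> (2+\<gamma>)/(4*(1+2*\<gamma>))"
    using pochhammer_ratio_antimono[of \<gamma> "2*\<gamma>" 3 n] pochhammer_ratio_3 assms
    unfolding r_def by simp
  moreover have "r \<ge> 0" unfolding r_def using assms by (simp add: pochhammer_nonneg)
  moreover have "nu \<gamma> n = - r" using nu_eq_pochhammer[OF assms(1), of n] assms(2) unfolding r_def by simp
  moreover have "weight \<gamma> n = 12" using assms unfolding weight_def by auto
  moreover have "pp \<gamma> n + 1 / weight \<gamma> n + weight \<gamma> (n - 1) * (qq \<gamma> (n - 1))\<^sup>2 \<ge> 0"
    using weighted_sum_nonneg assms by simp
  ultimately have "(1 - nu \<gamma> n) * (pp \<gamma> n + 1 / weight \<gamma> n + weight \<gamma> (n - 1) * (qq \<gamma> (n - 1))\<^sup>2)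
                   \<le> (1 + (2+\<gamma>)/(4*(1+2*\<gamma>))) * (pp \<gamma> n + 1/12 + 9/128)"
    using q by (intro mult_mono) auto
  also have "\<dots> \<le> 99/100" using pp_bound_odd assms by simp
  finally show ?thesis .
qed

lemma weighted_bound_even:
  assumes "\<gamma> > 0" "even n" "n \<ge> 4"
  shows "(1 - nu \<gamma> n) * (pp \<gamma> n + 1 / weight \<gamma> n + weight \<gamma> (n - 1) * (qq \<gamma> (n - 1))\<^sup>2)
           \<le> 99/100"
proof -
  define S where "S = pp \<gamma> n + 1 / weight \<gamma> n + weight \<gamma> (n - 1) * (qq \<gamma> (n - 1))\<^sup>2"
  have "nu \<gamma> n \<ge> 0"
    using nu_eq_pochhammer[OF assms(1), of n] assms by (simp add: pochhammer_nonneg)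
  moreover have "S \<ge> 0" using weighted_sum_nonneg assms unfolding S_def by simp
  ultimately have "(1 - nu \<gamma> n) * S \<le> S" by (simp add: left_diff_distrib)
  have "real (n - 1) = real n - 1" using assms by simp
  then have "(qq \<gamma> (n - 1))\<^sup>2 \<le> 1 / (8 * (2 * real n + 3*\<gamma> - 2))"
    using qq_squared_le[of \<gamma> "n - 1"] assms by (simp add: algebra_simps)
  moreover have "weight \<gamma> (n - 1) = 12" using assms unfolding weight_def by auto
  moreover have "1 / weight \<gamma> n = 16/(9*(2 * real n + 3*\<gamma>))"
    using assms unfolding weight_def by auto
  moreover have "12 * (1 / (8 * (2 * real n + 3*\<gamma> - 2))) = 3/(2*(2 * real n + 3*\<gamma> - 2))"
    by (simp add: divide_simps)
  ultimately have "S \<le> pp \<gamma> n + 16/(9*(2 * real n + 3*\<gamma>)) + 3/(2*(2 * real n + 3*\<gamma> - 2))"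
    unfolding S_def by simp
  also have "\<dots> \<le> 99/100" using pp_bound_even assms by simp
  finally show ?thesis using \<open>(1 - nu \<gamma> n) * S \<le> S\<close> unfolding S_def by linarith
qed

lemma weighted_sum_le:
  assumes "\<gamma> > 0" "n \<ge> 1"
  shows "(1 - nu \<gamma> n) * (pp \<gamma> n + \<bar>qq \<gamma> n\<bar> / beta \<gamma> n + \<bar>qq \<gamma> (n - 1)\<bar> * beta \<gamma> (n - 1))
           \<le> max (1 - 1 / (4 * (2 + 3*\<gamma>))) (99/100)"
proof -
  have "n = 1 \<or> n = 2 \<or> (odd n \<and> n \<ge> 3) \<or> (even n \<and> n \<ge> 4)"
    using assms(2) by presburger
  then consider "n = 1" | "n = 2" | "odd n" "n \<ge> 3" | "even n" "n \<ge> 4" by blast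
  then show ?thesis
  proof cases
    case 1
    then show ?thesis
      unfolding weighted_terms_eq[OF assms] using weighted_bound_1[OF assms(1)] by simp
  next
    case 2
    then show ?thesis
      unfolding weighted_terms_eq[OF assms] using weighted_bound_2[OF assms(1)] by (simp add: le_max_iff_disj)
  next
    case 3
    then show ?thesis
      unfolding weighted_terms_eq[OF assms] using weighted_bound_odd[OF assms(1) 3] by (simp add: le_max_iff_disj)
  next
    case 4
    then show ?thesis
      unfolding weighted_terms_eq[OF assms] using weighted_bound_even[OF assms(1) 4] by (simp add: le_max_iff_disj)
  qed
qed

theorem propositionA2:
  fixes \<gamma> :: real
  assumes "\<gamma> > 0"
  shows "\<exists>\<beta> :: nat \<Rightarrow> real. \<beta> 0 = 0 \<and> (\<forall>n\<ge>1. \<beta> n > 0) \<and>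
           (\<exists>c < 1. \<forall>n\<ge>1. (1 - nu \<gamma> n) *
              (pp \<gamma> n + \<bar>qq \<gamma> n\<bar> / \<beta> n + \<bar>qq \<gamma> (n - 1)\<bar> * \<beta> (n - 1)) \<le> c)"
proof (intro exI conjI allI impI)
  show "beta \<gamma> 0 = 0" unfolding beta_def by simp
  show "beta \<gamma> n > 0" if "n \<ge> 1" for n using beta_pos[OF assms that] .
  show "max (1 - 1 / (4 * (2 + 3*\<gamma>))) (99/100) < 1" using assms by simp
  show "(1 - nu \<gamma> n) * (pp \<gamma> n + \<bar>qq \<gamma> n\<bar> / beta \<gamma> n + \<bar>qq \<gamma> (n - 1)\<bar> * beta \<gamma> (n - 1))
          \<le> max (1 - 1 / (4 * (2 + 3*\<gamma>))) (99/100)" if "n \<ge> 1" for n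
    using weighted_sum_le[OF assms that] .
qed

end
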